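(* Let $D$ be an integral domain with quotient field $K$ and $\mathcal S$ a multiplicative subset of $D[X]$ ($0\notin\mathcal S$), and let $\circlearrowleft_{\mathcal S}$ be the semistar operation $E\mapsto ED[X]_{\mathcal S}\cap K$ on $D$. Then: (f) $\circlearrowleft_{\mathcal S}$ is a (semi)star operation on $D$ (i.e. $D^{\circlearrowleft_{\mathcal S}}=D$) if and only if $\mathcal S\subseteq\mathcal N^{v_D}$, if and only if $D=\bigcap\{D_P\mid P\in\boldsymbol\nabla(\mathcal S)\}$; (g) the map $\mathcal S\mapsto\circlearrowleft_{\mathcal S}$ is a bijection between the set of extended saturated multiplicative subsets of $D[X]$ and the set of stable semistar operations of finite type on $D$; it restricts to a bijection between the extended saturated multiplicative subsets of $D[X]$ contained in $\mathcal N^{v_D}$ and the stable (semi)star operations of finite type on $D$; (h) if $\mathcal S$ is extended saturated, then $\mathrm{Na}(D,v_D)=D[X]_{\mathcal S}$ if and only if $\mathcal S=\mathcal N^{v_D}$.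
   Context: $\overline{\boldsymbol F}(D)$ is the set of nonzero $D$-submodules of $K$. A semistar operation on $D$ is a map $\star:\overline{\boldsymbol F}(D)\to\overline{\boldsymbol F}(D)$ with $(xE)^\star=xE^\star$ for $0\ne x\in K$, $E\subseteq F\Rightarrow E^\star\subseteq F^\star$, $E\subseteq E^\star$ and $(E^\star)^\star=E^\star$; it is a (semi)star operation if $D^\star=D$. $\star$ is of finite type if $E^\star=\bigcup\{F^\star\mid F\subseteq E,\ F$ a nonzero finitely generated fractional ideal$\}$ for all $E$, and stable if $(E\cap F)^\star=E^\star\cap F^\star$. $v_D$ is the operation $E^{v}=(D:(D:E))$. For $f\in K[X]$, $\mathrm{c}_D(f)$ is the fractional ideal generated by its coefficients; $\mathcal N^\star=\{g\in D[X]\mid g\ne0,\ \mathrm{c}_D(g)^\star=D^\star\}$ and $\mathrm{Na}(D,\star)=D[X]_{\mathcal N^\star}$. For a multiplicative set $\mathcal S\subseteq D[X]$: its extended saturation is $\mathcal S^\sharp=D[X]\setminus\bigcup\{P[X]\mid P\in\mathrm{Spec}(D),\ P[X]\cap\mathcal S=\emptyset\}$; $\mathcal S$ is extended saturated if $\mathcal S=\mathcal S^\sharp$; $\boldsymbol\Delta(\mathcal S)=\{P\in\mathrm{Spec}(D)\mid P[X]\cap\mathcal S=\emptyset\}$ and $\boldsymbol\nabla(\mathcal S)$ is the set of maximal elements of $\boldsymbol\Delta(\mathcal S)$. *)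

theory Defs
  imports "HOL-Computational_Algebra.Polynomial" "HOL-Computational_Algebra.Fraction_Field"
          "HOL-Library.FuncSet"
begin

(* Conventions: K is the ambient field (a type of class field); D :: 'a set is a subring of K
   whose quotient field is K.  K(X) is modelled as 'a poly fract. *)

definition is_domain_with_qf :: "'a::field set \<Rightarrow> bool" where
  "is_domain_with_qf D \<longleftrightarrow> 0 \<in> D \<and> 1 \<in> D \<and>
     (\<forall>a\<in>D. \<forall>b\<in>D. a + b \<in> D \<and> a - b \<in> D \<and> a * b \<in> D) \<and>
     (\<forall>x. \<exists>a\<in>D. \<exists>b\<in>D. b \<noteq> 0 \<and> x = a / b)"

definition is_submodule :: "'a::field set \<Rightarrow> 'a set \<Rightarrow> bool" where
  "is_submodule D E \<longleftrightarrow> 0 \<in> E \<and> (\<forall>x\<in>E. \<forall>y\<in>E. x + y \<in> E) \<and> (\<forall>d\<in>D. \<forall>x\<in>E. d * x \<in> E)"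

definition Fbar :: "'a::field set \<Rightarrow> 'a set set" where
  "Fbar D = {E. is_submodule D E \<and> E \<noteq> {0}}"

definition gen_mod :: "'a::field set \<Rightarrow> 'a set \<Rightarrow> 'a set" where
  "gen_mod D A = {\<Sum>x\<in>B. c x * x | B c. finite B \<and> B \<subseteq> A \<and> (\<forall>x\<in>B. c x \<in> D)}"

definition fg_frac_ideals :: "'a::field set \<Rightarrow> 'a set set" where
  "fg_frac_ideals D = {gen_mod D A | A. finite A \<and> gen_mod D A \<noteq> {0}}"

definition semistar :: "'a::field set \<Rightarrow> ('a set \<Rightarrow> 'a set) \<Rightarrow> bool" where
  "semistar D st \<longleftrightarrow>
     (\<forall>E\<in>Fbar D. st E \<in> Fbar D) \<and>
     (\<forall>x. \<forall>E\<in>Fbar D. x \<noteq> 0 \<longrightarrow> st ((\<lambda>e. x * e) ` E) = (\<lambda>e. x * e) ` st E) \<and>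
     (\<forall>E\<in>Fbar D. \<forall>F\<in>Fbar D. E \<subseteq> F \<longrightarrow> st E \<subseteq> st F) \<and>
     (\<forall>E\<in>Fbar D. E \<subseteq> st E) \<and>
     (\<forall>E\<in>Fbar D. st (st E) = st E)"

definition semistar_finite_type :: "'a::field set \<Rightarrow> ('a set \<Rightarrow> 'a set) \<Rightarrow> bool" where
  "semistar_finite_type D st \<longleftrightarrow>
     (\<forall>E\<in>Fbar D. st E = \<Union>{st F | F. F \<in> fg_frac_ideals D \<and> F \<subseteq> E})"

definition semistar_stable :: "'a::field set \<Rightarrow> ('a set \<Rightarrow> 'a set) \<Rightarrow> bool" where
  "semistar_stable D st \<longleftrightarrow> (\<forall>E\<in>Fbar D. \<forall>F\<in>Fbar D. st (E \<inter> F) = st E \<inter> st F)"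

definition colon :: "'a::field set \<Rightarrow> 'a set \<Rightarrow> 'a set" where
  "colon D E = {x. \<forall>e\<in>E. x * e \<in> D}"

definition v_op :: "'a::field set \<Rightarrow> 'a set \<Rightarrow> 'a set" where
  "v_op D E = colon D (colon D E)"

definition DX :: "'a::field set \<Rightarrow> 'a poly set" where
  "DX D = {f. \<forall>i. coeff f i \<in> D}"

definition content_D :: "'a::field set \<Rightarrow> 'a poly \<Rightarrow> 'a set" where
  "content_D D f = gen_mod D (range (coeff f))"

definition Nstar :: "'a::field set \<Rightarrow> ('a set \<Rightarrow> 'a set) \<Rightarrow> 'a poly set" where
  "Nstar D st = {g \<in> DX D. g \<noteq> 0 \<and> st (content_D D g) = st D}"

definition mult_subset :: "'a::field set \<Rightarrow> 'a poly set \<Rightarrow> bool" where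
  "mult_subset D S \<longleftrightarrow> S \<subseteq> DX D \<and> 1 \<in> S \<and> 0 \<notin> S \<and> (\<forall>f\<in>S. \<forall>g\<in>S. f * g \<in> S)"

definition locX :: "'a::field set \<Rightarrow> 'a poly set \<Rightarrow> 'a poly fract set" where
  "locX D S = {Fract f g | f g. f \<in> DX D \<and> g \<in> S}"

definition Na :: "'a::field set \<Rightarrow> ('a set \<Rightarrow> 'a set) \<Rightarrow> 'a poly fract set" where
  "Na D st = locX D (Nstar D st)"

definition embK :: "'a::field \<Rightarrow> 'a poly fract" where
  "embK c = Fract [:c:] 1"

definition mod_prod :: "'b::comm_ring_1 set \<Rightarrow> 'b set \<Rightarrow> 'b set" where
  "mod_prod A B = {\<Sum>i<(n::nat). a i * b i | n a b. \<forall>i<n. a i \<in> A \<and> b i \<in> B}"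

(* E \<mapsto> E D[X]_S \<inter> K *)
definition circ_op :: "'a::field set \<Rightarrow> 'a poly set \<Rightarrow> 'a set \<Rightarrow> 'a set" where
  "circ_op D S E = {c. embK c \<in> mod_prod (embK ` E) (locX D S)}"

definition Spec :: "'a::field set \<Rightarrow> 'a set set" where
  "Spec D = {P. P \<subseteq> D \<and> 0 \<in> P \<and> P \<noteq> D \<and> (\<forall>x\<in>P. \<forall>y\<in>P. x + y \<in> P) \<and>
                (\<forall>d\<in>D. \<forall>x\<in>P. d * x \<in> P) \<and>
                (\<forall>x\<in>D. \<forall>y\<in>D. x * y \<in> P \<longrightarrow> x \<in> P \<or> y \<in> P)}"

definition ext_ideal :: "'a::field set \<Rightarrow> 'a poly set" where
  "ext_ideal P = {f. \<forall>i. coeff f i \<in> P}"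

definition ext_sat :: "'a::field set \<Rightarrow> 'a poly set \<Rightarrow> 'a poly set" where
  "ext_sat D S = DX D - \<Union>{ext_ideal P | P. P \<in> Spec D \<and> ext_ideal P \<inter> S = {}}"

definition is_ext_saturated :: "'a::field set \<Rightarrow> 'a poly set \<Rightarrow> bool" where
  "is_ext_saturated D S \<longleftrightarrow> S = ext_sat D S"

definition Delta :: "'a::field set \<Rightarrow> 'a poly set \<Rightarrow> 'a set set" where
  "Delta D S = {P \<in> Spec D. ext_ideal P \<inter> S = {}}"

definition Nabla :: "'a::field set \<Rightarrow> 'a poly set \<Rightarrow> 'a set set" where
  "Nabla D S = {P \<in> Delta D S. \<forall>Q\<in>Delta D S. P \<subseteq> Q \<longrightarrow> Q = P}"

definition localize_at :: "'a::field set \<Rightarrow> 'a set \<Rightarrow> 'a set" where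
  "localize_at D P = {a / s | a s. a \<in> D \<and> s \<in> D - P}"

end

theory Submission
  imports Defs
begin

text \<open>
  Everything rests on one membership criterion (circ_mem_iff): c \<in> E D[X]_S \<inter> K iff c g \<in> E[X]
  for some g \<in> S.  From it the operation, restricted to nonzero submodules, is a stable
  semistar operation of finite type (circ_stable_semistar_ft).

  (f) The criterion gives D D[X]_S \<inter> K = \<Union>{(D : c(g)) | g \<in> S}, which equals D iff
  c(g)^v = D for all g \<in> S (circ_D_eq_D_iff).  A Zorn argument for ideals maximal with
  I[X] \<inter> S = {} identifies it with \<Inter>{D_P | P \<in> \<nabla>(S)} (circ_D_eq_localizations).

  (g) Injectivity: \<Delta>(S) can be read off from the operation, and an extended saturated S is
  determined by \<Delta>(S).  Surjectivity: for a stable \<star> of finite type, N^\<star> consists of the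
  nonzero polynomials lying in no M[X] with M prime and 1 \<notin> M^\<star> (Zorn again, using finite
  type); by Gauss' lemma it is multiplicative, it is extended saturated, and by stability and
  finite type its operation is \<star> (circ_Nstar).  Part (f) restricts the bijection.

  (h) N^v and extended saturated sets are saturated, and saturated sets of denominators are
  determined by their localizations.
\<close>

section \<open>Submodules of K and the domain D\<close>

lemma submod_sum:
  assumes "is_submodule D E" "\<And>i. i \<in> A \<Longrightarrow> f i \<in> E"
  shows "sum f A \<in> E"
  using assms unfolding is_submodule_def
  by (induction A rule: infinite_finite_induct) auto

lemma submod_Int: "is_submodule D E \<Longrightarrow> is_submodule D F \<Longrightarrow> is_submodule D (E \<inter> F)"
  unfolding is_submodule_def by auto

lemma submod_scale:
  assumes "is_submodule D E"
  shows "is_submodule D ((\<lambda>e. x * e) ` E)"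
proof -
  have "x * a + x * b \<in> (\<lambda>e. x * e) ` E" if "a \<in> E" "b \<in> E" for a b
    using assms that unfolding is_submodule_def by (metis distrib_left image_eqI)
  moreover have "d * (x * a) \<in> (\<lambda>e. x * e) ` E" if "a \<in> E" "d \<in> D" for a d
    using assms that unfolding is_submodule_def by (metis mult.left_commute image_eqI)
  ultimately show ?thesis using assms unfolding is_submodule_def by (auto simp: image_iff)
qed

lemma submod_preimage:
  assumes "is_submodule D E"
  shows "is_submodule D {y. x * y \<in> E}"
  using assms unfolding is_submodule_def
  by (auto simp: distrib_left) (metis mult.left_commute)

lemma mem_scale_iff:
  fixes x :: "'a::field"
  assumes "x \<noteq> 0"
  shows "c \<in> (\<lambda>e. x * e) ` A \<longleftrightarrow> inverse x * c \<in> A"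
proof
  assume "c \<in> (\<lambda>e. x * e) ` A"
  then obtain e where "e \<in> A" "c = x * e" by auto
  thus "inverse x * c \<in> A" using assms by (simp add: mult.assoc[symmetric])
next
  assume "inverse x * c \<in> A"
  moreover have "c = x * (inverse x * c)" using assms by (simp add: mult.assoc[symmetric])
  ultimately show "c \<in> (\<lambda>e. x * e) ` A" by blast
qed

lemma gen_mod_least:
  assumes E: "is_submodule D E" and "A \<subseteq> E"
  shows "gen_mod D A \<subseteq> E"
proof
  fix x assume "x \<in> gen_mod D A"
  then obtain B c where x: "x = (\<Sum>x\<in>B. c x * x)" "B \<subseteq> A" "\<forall>x\<in>B. c x \<in> D"
    unfolding gen_mod_def by blast
  show "x \<in> E" unfolding x(1)
    by (rule submod_sum[OF E]) (use x assms in \<open>auto simp: is_submodule_def\<close>)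
qed

lemma Fbar_submod: "E \<in> Fbar D \<Longrightarrow> is_submodule D E"
  unfolding Fbar_def by auto

lemma Fbar_of_sup: "is_submodule D J \<Longrightarrow> I \<in> Fbar D \<Longrightarrow> I \<subseteq> J \<Longrightarrow> J \<in> Fbar D"
  unfolding Fbar_def is_submodule_def by auto

lemma Fbar_scale:
  assumes "E \<in> Fbar D" "x \<noteq> 0"
  shows "(\<lambda>e. x * e) ` E \<in> Fbar D"
proof -
  have E: "is_submodule D E" "E \<noteq> {0}" using assms unfolding Fbar_def by auto
  then obtain e where "e \<in> E" "e \<noteq> 0" unfolding is_submodule_def by auto
  hence "x * e \<in> (\<lambda>e. x * e) ` E" "x * e \<noteq> 0" using assms by auto
  thus ?thesis using submod_scale[OF E(1)] unfolding Fbar_def by blast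
qed

locale qf_domain =
  fixes D :: "'a::field set"
  assumes domain: "is_domain_with_qf D"
begin

lemma zero_mem: "0 \<in> D"
  and one_mem: "1 \<in> D"
  and add_mem: "a \<in> D \<Longrightarrow> b \<in> D \<Longrightarrow> a + b \<in> D"
  and diff_mem: "a \<in> D \<Longrightarrow> b \<in> D \<Longrightarrow> a - b \<in> D"
  and mult_mem: "a \<in> D \<Longrightarrow> b \<in> D \<Longrightarrow> a * b \<in> D"
  and fraction: "\<exists>a\<in>D. \<exists>b\<in>D. b \<noteq> 0 \<and> x = a / b"
  using domain unfolding is_domain_with_qf_def by auto

lemma D_submod: "is_submodule D D"
  using zero_mem add_mem mult_mem unfolding is_submodule_def by auto

lemma D_Fbar: "D \<in> Fbar D"
  using D_submod one_mem unfolding Fbar_def by auto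

lemma submod_diff:
  assumes E: "is_submodule D E" and "x \<in> E" "y \<in> E"
  shows "x - y \<in> E"
proof -
  have "(0 - 1) * y \<in> E" using E assms(3) diff_mem[OF zero_mem one_mem]
    unfolding is_submodule_def by blast
  hence "x + (0 - 1) * y \<in> E" using E assms(2) unfolding is_submodule_def by blast
  thus ?thesis by simp
qed

text \<open>Two nonzero submodules of K meet nontrivially, since K is the quotient field of D.\<close>
lemma Fbar_Int:
  assumes "E \<in> Fbar D" "F \<in> Fbar D"
  shows "E \<inter> F \<in> Fbar D"
proof -
  have E: "is_submodule D E" "E \<noteq> {0}" and F: "is_submodule D F" "F \<noteq> {0}"
    using assms unfolding Fbar_def by auto
  obtain e where e: "e \<in> E" "e \<noteq> 0" using E unfolding is_submodule_def by auto
  obtain f where f: "f \<in> F" "f \<noteq> 0" using F unfolding is_submodule_def by auto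
  obtain a b where ab: "a \<in> D" "b \<in> D" "b \<noteq> 0" "e = a / b" using fraction by blast
  obtain c d where cd: "c \<in> D" "d \<in> D" "d \<noteq> 0" "f = c / d" using fraction by blast
  have "(b * c) * e \<in> E" using E e ab cd mult_mem unfolding is_submodule_def by blast
  moreover have "(b * c) * e = a * c" using ab by (simp add: field_simps)
  moreover have "(a * d) * f \<in> F" using F f ab cd mult_mem unfolding is_submodule_def by blast
  moreover have "(a * d) * f = a * c" using cd by (simp add: field_simps)
  ultimately have "a * c \<in> E \<inter> F" by simp
  moreover have "a * c \<noteq> 0" using ab cd e f by auto
  ultimately have "E \<inter> F \<noteq> {0}" by blast
  thus ?thesis using submod_Int[OF E(1) F(1)] unfolding Fbar_def by simp
qed

lemma gen_mod_submod: "is_submodule D (gen_mod D A)"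
proof -
  have zero: "0 \<in> gen_mod D A" unfolding gen_mod_def by (intro CollectI exI[of _ "{}"]) auto
  have add: "x + y \<in> gen_mod D A" if x: "x \<in> gen_mod D A" and y: "y \<in> gen_mod D A" for x y
  proof -
    obtain B1 c1 where 1: "x = (\<Sum>x\<in>B1. c1 x * x)" "finite B1" "B1 \<subseteq> A" "\<forall>x\<in>B1. c1 x \<in> D"
      using x unfolding gen_mod_def by blast
    obtain B2 c2 where 2: "y = (\<Sum>x\<in>B2. c2 x * x)" "finite B2" "B2 \<subseteq> A" "\<forall>x\<in>B2. c2 x \<in> D"
      using y unfolding gen_mod_def by blast
    define d1 where "d1 x = (if x \<in> B1 then c1 x else 0)" for x
    define d2 where "d2 x = (if x \<in> B2 then c2 x else 0)" for x
    have "x = (\<Sum>z\<in>B1\<union>B2. d1 z * z)" unfolding 1(1)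
      by (rule sum.mono_neutral_cong_left) (auto simp: 1 2 d1_def)
    moreover have "y = (\<Sum>z\<in>B1\<union>B2. d2 z * z)" unfolding 2(1)
      by (rule sum.mono_neutral_cong_left) (auto simp: 1 2 d2_def)
    ultimately have "x + y = (\<Sum>z\<in>B1\<union>B2. (d1 z + d2 z) * z)"
      by (simp add: sum.distrib distrib_right)
    moreover have "\<forall>z\<in>B1\<union>B2. d1 z + d2 z \<in> D"
      using 1 2 zero_mem add_mem by (auto simp: d1_def d2_def)
    ultimately show ?thesis using 1 2 unfolding gen_mod_def
      by (intro CollectI exI[of _ "B1 \<union> B2"] exI[of _ "\<lambda>z. d1 z + d2 z"]) auto
  qed
  have scale: "d * x \<in> gen_mod D A" if d: "d \<in> D" and x: "x \<in> gen_mod D A" for d x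
  proof -
    obtain B c where 1: "x = (\<Sum>x\<in>B. c x * x)" "finite B" "B \<subseteq> A" "\<forall>x\<in>B. c x \<in> D"
      using x unfolding gen_mod_def by blast
    have "d * x = (\<Sum>z\<in>B. (d * c z) * z)" unfolding 1(1)
      by (simp add: sum_distrib_left mult.assoc)
    moreover have "\<forall>z\<in>B. d * c z \<in> D" using 1 d mult_mem by auto
    ultimately show ?thesis using 1 unfolding gen_mod_def
      by (intro CollectI exI[of _ B] exI[of _ "\<lambda>z. d * c z"]) auto
  qed
  show ?thesis unfolding is_submodule_def using zero add scale by blast
qed

lemma gen_mod_gen: "a \<in> A \<Longrightarrow> a \<in> gen_mod D A"
  unfolding gen_mod_def using one_mem
  by (intro CollectI exI[of _ "{a}"] exI[of _ "\<lambda>_. 1"]) auto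

lemma gen_mod_subset_iff: "is_submodule D E \<Longrightarrow> gen_mod D A \<subseteq> E \<longleftrightarrow> A \<subseteq> E"
  using gen_mod_least gen_mod_gen by blast

lemma fg_Fbar: "fg_frac_ideals D \<subseteq> Fbar D"
  unfolding fg_frac_ideals_def Fbar_def using gen_mod_submod by blast

end

section \<open>Polynomials: extended modules E[X] and contents\<close>

lemma ext_mult:
  assumes E: "is_submodule D E" and f: "f \<in> ext_ideal E" and g: "g \<in> DX D"
  shows "f * g \<in> ext_ideal E" "g * f \<in> ext_ideal E"
proof -
  have "coeff (f * g) n \<in> E" for n
    unfolding coeff_mult
  proof (rule submod_sum[OF E])
    fix i
    have "coeff g (n - i) * coeff f i \<in> E"
      using E f g unfolding is_submodule_def ext_ideal_def DX_def by blast
    thus "coeff f i * coeff g (n - i) \<in> E" by (simp add: mult.commute)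
  qed
  thus "f * g \<in> ext_ideal E" "g * f \<in> ext_ideal E" by (auto simp: ext_ideal_def mult.commute)
qed

lemma ext_add: "is_submodule D E \<Longrightarrow> f \<in> ext_ideal E \<Longrightarrow> g \<in> ext_ideal E \<Longrightarrow> f + g \<in> ext_ideal E"
  and ext_smult: "is_submodule D E \<Longrightarrow> f \<in> ext_ideal E \<Longrightarrow> d \<in> D \<Longrightarrow> smult d f \<in> ext_ideal E"
  and ext_zero: "is_submodule D E \<Longrightarrow> 0 \<in> ext_ideal E"
  and ext_const: "is_submodule D E \<Longrightarrow> c \<in> E \<Longrightarrow> [:c:] \<in> ext_ideal E"
  unfolding is_submodule_def ext_ideal_def by (auto simp: coeff_pCons split: nat.splits)

lemma ext_ideal_zero: "ext_ideal {0} = {0}"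
  unfolding ext_ideal_def by (auto simp: poly_eq_iff)

lemma DX_ext: "DX D = ext_ideal D"
  unfolding DX_def ext_ideal_def by simp

lemma finite_range_coeff: "finite (range (coeff p))"
proof (rule finite_subset)
  show "range (coeff p) \<subseteq> insert 0 (coeff p ` {..degree p})"
  proof
    fix x assume "x \<in> range (coeff p)"
    then obtain i where "x = coeff p i" by blast
    thus "x \<in> insert 0 (coeff p ` {..degree p})" by (cases "i \<le> degree p") (auto simp: coeff_eq_0)
  qed
qed simp

text \<open>Gauss' lemma for primes: P[X] is a prime ideal of D[X] whenever P is a prime of D.\<close>
lemma (in qf_domain) ext_ideal_prime:
  assumes P: "P \<in> Spec D" and f: "f \<in> DX D" and g: "g \<in> DX D"
    and nf: "f \<notin> ext_ideal P" and ng: "g \<notin> ext_ideal P"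
  shows "f * g \<notin> ext_ideal P"
proof
  assume fg: "f * g \<in> ext_ideal P"
  have Ps: "is_submodule D P" using P unfolding Spec_def is_submodule_def by auto
  define i where "i = (LEAST i. coeff f i \<notin> P)"
  define j where "j = (LEAST j. coeff g j \<notin> P)"
  have ex: "\<exists>i. coeff f i \<notin> P" "\<exists>j. coeff g j \<notin> P" using nf ng unfolding ext_ideal_def by auto
  have fi: "coeff f i \<notin> P" unfolding i_def by (rule LeastI_ex[OF ex(1)])
  have gj: "coeff g j \<notin> P" unfolding j_def by (rule LeastI_ex[OF ex(2)])
  have fk: "coeff f k \<in> P" if "k < i" for k using not_less_Least that i_def by blast
  have gk: "coeff g k \<in> P" if "k < j" for k using not_less_Least that j_def by blast
  have fD: "coeff f k \<in> D" and gD: "coeff g k \<in> D" for k using f g unfolding DX_def by auto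
  text \<open>All terms of the (i+j)-th coefficient of fg except the i-th lie in P.\<close>
  have rest: "(\<Sum>k\<in>{..i + j} - {i}. coeff f k * coeff g (i + j - k)) \<in> P"
  proof (rule submod_sum[OF Ps])
    fix k assume k: "k \<in> {..i + j} - {i}"
    show "coeff f k * coeff g (i + j - k) \<in> P"
    proof (cases "k < i")
      case True thus ?thesis using Ps fk gD unfolding is_submodule_def by (metis mult.commute)
    next
      case False
      hence "i + j - k < j" using k by auto
      thus ?thesis using Ps gk fD unfolding is_submodule_def by blast
    qed
  qed
  have "coeff (f * g) (i + j) =
      coeff f i * coeff g j + (\<Sum>k\<in>{..i + j} - {i}. coeff f k * coeff g (i + j - k))"
    unfolding coeff_mult by (subst sum.remove[of _ i]) auto
  hence "coeff f i * coeff g j =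
      coeff (f * g) (i + j) - (\<Sum>k\<in>{..i + j} - {i}. coeff f k * coeff g (i + j - k))"
    by simp
  also have "\<dots> \<in> P"
    using submod_diff[OF Ps _ rest] fg unfolding ext_ideal_def by blast
  finally have "coeff f i * coeff g j \<in> P" .
  moreover have "x \<in> P \<or> y \<in> P" if "x \<in> D" "y \<in> D" "x * y \<in> P" for x y
    using P that unfolding Spec_def by blast
  ultimately show False using fD gD fi gj by blast
qed

context qf_domain
begin

lemma DX_mult: "f \<in> DX D \<Longrightarrow> g \<in> DX D \<Longrightarrow> f * g \<in> DX D"
  using ext_mult[OF D_submod] DX_ext by metis

lemma DX_one: "1 \<in> DX D"
  using zero_mem one_mem unfolding DX_def by (auto simp: coeff_1)

lemma content_sub_iff: "is_submodule D E \<Longrightarrow> content_D D g \<subseteq> E \<longleftrightarrow> g \<in> ext_ideal E"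
  unfolding content_D_def gen_mod_subset_iff ext_ideal_def by auto

lemma content_scale_sub_iff:
  assumes E: "is_submodule D E"
  shows "(\<lambda>e. x * e) ` content_D D g \<subseteq> E \<longleftrightarrow> smult x g \<in> ext_ideal E"
proof -
  have "(\<lambda>e. x * e) ` content_D D g \<subseteq> E \<longleftrightarrow> content_D D g \<subseteq> {y. x * y \<in> E}" by auto
  also have "\<dots> \<longleftrightarrow> g \<in> ext_ideal {y. x * y \<in> E}"
    by (rule content_sub_iff[OF submod_preimage[OF E]])
  also have "\<dots> \<longleftrightarrow> smult x g \<in> ext_ideal E" unfolding ext_ideal_def by simp
  finally show ?thesis .
qed

lemma content_submod: "is_submodule D (content_D D g)"
  unfolding content_D_def by (rule gen_mod_submod)

lemma coeff_in_content: "coeff g i \<in> content_D D g"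
  unfolding content_D_def by (rule gen_mod_gen) auto

lemma content_sub_D: "g \<in> DX D \<Longrightarrow> content_D D g \<subseteq> D"
  using content_sub_iff[OF D_submod] DX_ext by metis

lemma content_Fbar: "g \<noteq> 0 \<Longrightarrow> content_D D g \<in> Fbar D"
  using coeff_in_content[of g "degree g"] content_submod[of g] unfolding Fbar_def by auto

lemma fg_is_content:
  assumes G: "G \<in> fg_frac_ideals D"
  obtains g where "g \<noteq> 0" "g \<in> ext_ideal G" "content_D D g = G"
proof -
  obtain A where A: "finite A" "G = gen_mod D A" "G \<noteq> {0}"
    using G unfolding fg_frac_ideals_def by blast
  obtain xs where xs: "set xs = A" using finite_list[OF A(1)] by blast
  define g where "g = Poly xs"
  have G_submod: "is_submodule D G" using gen_mod_submod A(2) by simp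
  have "coeff g i \<in> G" for i
  proof -
    have "coeff g i \<in> A \<or> coeff g i = 0"
      unfolding g_def coeff_Poly_eq nth_default_def using xs by auto
    thus ?thesis using A(2) gen_mod_gen G_submod unfolding is_submodule_def by auto
  qed
  hence g_G: "g \<in> ext_ideal G" unfolding ext_ideal_def by simp
  have "A \<subseteq> content_D D g"
  proof
    fix a assume "a \<in> A"
    then obtain k where "k < length xs" "xs ! k = a" using xs by (auto simp: in_set_conv_nth)
    hence "coeff g k = a" unfolding g_def coeff_Poly_eq by (simp add: nth_default_nth)
    thus "a \<in> content_D D g" using coeff_in_content[of g k] by simp
  qed
  hence "G \<subseteq> content_D D g" unfolding A(2) by (rule gen_mod_least[OF content_submod])
  moreover have "content_D D g \<subseteq> G" using content_sub_iff[OF G_submod] g_G by simp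
  ultimately have content: "content_D D g = G" by simp
  have "g \<noteq> 0"
  proof
    assume "g = 0"
    moreover have "is_submodule D {0}" unfolding is_submodule_def by simp
    ultimately have "content_D D g \<subseteq> {0}"
      using content_sub_iff ext_ideal_zero by blast
    thus False using A(3) content G_submod unfolding is_submodule_def by auto
  qed
  thus thesis using that g_G content by blast
qed

end

section \<open>The operation E \<mapsto> E D[X]_S \<inter> K\<close>

lemma Fract_sum_common_denom:
  fixes g :: "'b::idom"
  assumes "g \<noteq> 0"
  shows "(\<Sum>i\<in>A. Fract (f i) g) = Fract (\<Sum>i\<in>A. f i) g"
proof (induction A rule: infinite_finite_induct)
  case (insert x F)
  have "Fract (f x) g + Fract (sum f F) g = Fract ((f x + sum f F) * g) (g * g)"
    using assms by (simp add: distrib_right)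
  also have "\<dots> = Fract (f x + sum f F) g"
    using mult_fract_cancel[OF assms, of "f x + sum f F" g] by (simp add: mult.commute)
  finally show ?case using insert by simp
qed (simp_all add: Zero_fract_def eq_fract(3))

locale poly_mult_set = qf_domain +
  fixes S :: "'a::field poly set"
  assumes mult_set: "mult_subset D S"
begin

lemma zero_notin_S: "0 \<notin> S"
  and one_in_S: "1 \<in> S"
  and S_DX: "g \<in> S \<Longrightarrow> g \<in> DX D"
  and S_mult: "f \<in> S \<Longrightarrow> g \<in> S \<Longrightarrow> f * g \<in> S"
  using mult_set unfolding mult_subset_def by auto

text \<open>Every element of the product module E D[X]_S is a fraction h/g with h \<in> E[X]
  and g \<in> S (bring the finite sum to a common denominator).\<close>
lemma mod_prod_fraction:
  assumes E: "is_submodule D E" and z: "z \<in> mod_prod (embK ` E) (locX D S)"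
  obtains h g where "g \<in> S" "h \<in> ext_ideal E" "z = Fract h g"
proof -
  obtain n :: nat and a b where z: "z = (\<Sum>i<n. a i * b i)"
    and ab: "\<forall>i<n. a i \<in> embK ` E \<and> b i \<in> locX D S"
    using z unfolding mod_prod_def by blast
  have "\<forall>i<m. a i \<in> embK ` E \<and> b i \<in> locX D S \<Longrightarrow>
        \<exists>h g. g \<in> S \<and> h \<in> ext_ideal E \<and> (\<Sum>i<m. a i * b i) = Fract h g" for m
  proof (induction m)
    case 0
    show ?case using one_in_S ext_zero[OF E]
      by (intro exI[of _ 0] exI[of _ 1]) (simp add: Zero_fract_def)
  next
    case (Suc m)
    then obtain h g where hg: "g \<in> S" "h \<in> ext_ideal E" "(\<Sum>i<m. a i * b i) = Fract h g"
      by auto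
    obtain e where e: "e \<in> E" "a m = embK e" using Suc.prems by auto
    obtain f g' where fg: "f \<in> DX D" "g' \<in> S" "b m = Fract f g'"
      using Suc.prems unfolding locX_def by auto
    have "g \<noteq> 0" "g' \<noteq> 0" using hg fg zero_notin_S by auto
    moreover have "a m * b m = Fract (smult e f) g'" using e fg by (simp add: embK_def)
    ultimately have "(\<Sum>i<Suc m. a i * b i) = Fract (h * g' + smult e f * g) (g * g')"
      using hg by simp
    moreover have "coeff f i * e \<in> E" for i
      using e E fg unfolding DX_def is_submodule_def by blast
    hence "smult e f \<in> ext_ideal E" unfolding ext_ideal_def by (simp add: mult.commute)
    hence "h * g' + smult e f * g \<in> ext_ideal E"
      using ext_add[OF E] ext_mult(1)[OF E hg(2) S_DX[OF fg(2)]] ext_mult(1)[OF E _ S_DX[OF hg(1)]]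
      by blast
    ultimately show ?case using S_mult[OF hg(1) fg(2)]
      by (intro exI[of _ "h * g' + smult e f * g"] exI[of _ "g * g'"]) simp
  qed
  thus thesis using that ab z by blast
qed

text \<open>Conversely every fraction h/g with h \<in> E[X] and g \<in> S lies in E D[X]_S:
  h/g = \<Sum>i. h_i \<cdot> X^i/g.\<close>
lemma fraction_in_mod_prod:
  assumes h: "h \<in> ext_ideal E" and g: "g \<in> S"
  shows "Fract h g \<in> mod_prod (embK ` E) (locX D S)"
proof -
  have g0: "g \<noteq> 0" using g zero_notin_S by auto
  define n where "n = Suc (degree h)"
  define a where "a i = embK (coeff h i)" for i
  define b where "b i = Fract (monom 1 i) g" for i
  have "(\<Sum>i<n. a i * b i) = (\<Sum>i<n. Fract (monom (coeff h i) i) g)"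
    unfolding a_def b_def embK_def by (simp add: smult_monom)
  also have "\<dots> = Fract (\<Sum>i<n. monom (coeff h i) i) g" by (rule Fract_sum_common_denom[OF g0])
  also have "(\<Sum>i<n. monom (coeff h i) i) = h"
    unfolding n_def lessThan_Suc_atMost by (rule poly_as_sum_of_monoms)
  finally have "Fract h g = (\<Sum>i<n. a i * b i)" by simp
  moreover have "monom 1 i \<in> DX D" for i using zero_mem one_mem unfolding DX_def by auto
  hence "\<forall>i<n. a i \<in> embK ` E \<and> b i \<in> locX D S"
    using g h unfolding a_def b_def locX_def ext_ideal_def by blast
  ultimately show ?thesis unfolding mod_prod_def by blast
qed

lemma circ_mem_iff:
  assumes E: "is_submodule D E"
  shows "c \<in> circ_op D S E \<longleftrightarrow> (\<exists>g\<in>S. smult c g \<in> ext_ideal E)"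
proof
  assume "c \<in> circ_op D S E"
  then obtain h g where hg: "g \<in> S" "h \<in> ext_ideal E" "embK c = Fract h g"
    using mod_prod_fraction[OF E] unfolding circ_op_def by blast
  have "g \<noteq> 0" using hg zero_notin_S by auto
  hence "smult c g = h" using hg(3) unfolding embK_def by (simp add: eq_fract)
  thus "\<exists>g\<in>S. smult c g \<in> ext_ideal E" using hg by auto
next
  assume "\<exists>g\<in>S. smult c g \<in> ext_ideal E"
  then obtain g where g: "g \<in> S" "smult c g \<in> ext_ideal E" by auto
  hence "g \<noteq> 0" using zero_notin_S by auto
  hence "embK c = Fract (smult c g) g" unfolding embK_def by (simp add: eq_fract)
  thus "c \<in> circ_op D S E" using fraction_in_mod_prod[OF g(2,1)] unfolding circ_op_def by simp
qed

lemma circ_mono: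
  assumes E: "is_submodule D E" and F: "is_submodule D F" and "E \<subseteq> F"
  shows "circ_op D S E \<subseteq> circ_op D S F"
proof
  fix c assume "c \<in> circ_op D S E"
  then obtain g where "g \<in> S" "smult c g \<in> ext_ideal E" using circ_mem_iff[OF E] by blast
  moreover have "ext_ideal E \<subseteq> ext_ideal F" using \<open>E \<subseteq> F\<close> unfolding ext_ideal_def by auto
  ultimately show "c \<in> circ_op D S F" using circ_mem_iff[OF F] by blast
qed

lemma circ_extensive:
  assumes E: "is_submodule D E"
  shows "E \<subseteq> circ_op D S E"
proof
  fix c assume "c \<in> E"
  hence "smult c 1 \<in> ext_ideal E" using ext_const[OF E] by simp
  thus "c \<in> circ_op D S E" using circ_mem_iff[OF E] one_in_S by blast
qed

lemma common_denominator:
  assumes E: "is_submodule D E" and A: "finite A" "A \<subseteq> circ_op D S E"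
  shows "\<exists>H\<in>S. \<forall>y\<in>A. smult y H \<in> ext_ideal E"
  using A
proof (induction A rule: finite_induct)
  case empty thus ?case using one_in_S by auto
next
  case (insert a A)
  then obtain H where H: "H \<in> S" "\<forall>y\<in>A. smult y H \<in> ext_ideal E" by auto
  obtain h where h: "h \<in> S" "smult a h \<in> ext_ideal E"
    using insert.prems circ_mem_iff[OF E] by auto
  have "smult y (H * h) \<in> ext_ideal E" if "y \<in> insert a A" for y
  proof (cases "y = a")
    case True
    thus ?thesis using ext_mult(1)[OF E h(2)] H S_DX by (simp add: mult.commute)
  next
    case False
    hence "y \<in> A" using that by simp
    hence "smult y H * h \<in> ext_ideal E" using ext_mult(1)[OF E] H(2) S_DX[OF h(1)] by blast
    thus ?thesis by simp
  qed
  thus ?case using H h S_mult by blast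
qed

text \<open>E D[X]_S \<inter> K is a submodule: sums are handled by a common denominator.\<close>
lemma circ_submod:
  assumes E: "is_submodule D E"
  shows "is_submodule D (circ_op D S E)"
proof -
  have "0 \<in> circ_op D S E" using circ_extensive[OF E] E unfolding is_submodule_def by auto
  moreover have "x + y \<in> circ_op D S E"
    if x: "x \<in> circ_op D S E" and y: "y \<in> circ_op D S E" for x y
  proof -
    obtain H where H: "H \<in> S" "smult x H \<in> ext_ideal E" "smult y H \<in> ext_ideal E"
      using common_denominator[OF E, of "{x, y}"] x y by auto
    hence "smult (x + y) H \<in> ext_ideal E" using ext_add[OF E H(2,3)] by (simp add: smult_add_left)
    thus ?thesis using circ_mem_iff[OF E] H by auto
  qed
  moreover have "d * x \<in> circ_op D S E" if d: "d \<in> D" and x: "x \<in> circ_op D S E" for d x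
  proof -
    obtain H where H: "H \<in> S" "smult x H \<in> ext_ideal E" using circ_mem_iff[OF E] x by blast
    hence "smult (d * x) H \<in> ext_ideal E" using ext_smult[OF E H(2) d] by simp
    thus ?thesis using circ_mem_iff[OF E] H(1) by blast
  qed
  ultimately show ?thesis unfolding is_submodule_def by blast
qed

lemma circ_Fbar: "E \<in> Fbar D \<Longrightarrow> circ_op D S E \<in> Fbar D"
  using Fbar_of_sup[OF circ_submod _ circ_extensive] Fbar_submod by blast

text \<open>Idempotence: the coefficients of y g, for y in the closure of the closure,
  have a common denominator H \<in> S, so y g H \<in> E[X].\<close>
lemma circ_idem:
  assumes E: "is_submodule D E"
  shows "circ_op D S (circ_op D S E) = circ_op D S E"
proof
  show "circ_op D S (circ_op D S E) \<subseteq> circ_op D S E"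
  proof
    fix y assume "y \<in> circ_op D S (circ_op D S E)"
    then obtain g where g: "g \<in> S" "smult y g \<in> ext_ideal (circ_op D S E)"
      using circ_mem_iff[OF circ_submod[OF E]] by auto
    let ?A = "(\<lambda>i. coeff (smult y g) i) ` {..degree g}"
    have "?A \<subseteq> circ_op D S E" using g(2) unfolding ext_ideal_def by auto
    then obtain H where H: "H \<in> S" "\<forall>z\<in>?A. smult z H \<in> ext_ideal E"
      using common_denominator[OF E] by blast
    have "coeff (smult y g * H) n \<in> E" for n
      unfolding coeff_mult
    proof (rule submod_sum[OF E])
      fix i
      show "coeff (smult y g) i * coeff H (n - i) \<in> E"
      proof (cases "i \<le> degree g")
        case True
        hence "coeff (smult (coeff (smult y g) i) H) (n - i) \<in> E"
          using H unfolding ext_ideal_def by auto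
        thus ?thesis by simp
      next
        case False
        thus ?thesis using E unfolding is_submodule_def by (simp add: coeff_eq_0)
      qed
    qed
    hence "smult y (g * H) \<in> ext_ideal E" unfolding ext_ideal_def by simp
    thus "y \<in> circ_op D S E" using circ_mem_iff[OF E] g H S_mult by blast
  qed
qed (rule circ_extensive[OF circ_submod[OF E]])

lemma circ_scale:
  assumes E: "is_submodule D E" and x: "x \<noteq> 0"
  shows "circ_op D S ((\<lambda>e. x * e) ` E) = (\<lambda>e. x * e) ` circ_op D S E"
proof (rule set_eqI)
  fix c
  have "f \<in> ext_ideal ((\<lambda>e. x * e) ` E) \<longleftrightarrow> smult (inverse x) f \<in> ext_ideal E" for f
    using mem_scale_iff[OF x] unfolding ext_ideal_def by simp
  hence "c \<in> circ_op D S ((\<lambda>e. x * e) ` E) \<longleftrightarrow>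
      (\<exists>g\<in>S. smult (inverse x * c) g \<in> ext_ideal E)"
    using circ_mem_iff[OF submod_scale[OF E]] by simp
  also have "\<dots> \<longleftrightarrow> c \<in> (\<lambda>e. x * e) ` circ_op D S E"
    using circ_mem_iff[OF E] mem_scale_iff[OF x] by simp
  finally show "c \<in> circ_op D S ((\<lambda>e. x * e) ` E) \<longleftrightarrow> c \<in> (\<lambda>e. x * e) ` circ_op D S E" .
qed

text \<open>Stability: the product of the two denominators clears both memberships at once.\<close>
lemma circ_Int:
  assumes E: "is_submodule D E" and F: "is_submodule D F"
  shows "circ_op D S (E \<inter> F) = circ_op D S E \<inter> circ_op D S F"
proof
  show "circ_op D S (E \<inter> F) \<subseteq> circ_op D S E \<inter> circ_op D S F"
    using circ_mono[OF submod_Int[OF E F] E] circ_mono[OF submod_Int[OF E F] F] by blast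
  show "circ_op D S E \<inter> circ_op D S F \<subseteq> circ_op D S (E \<inter> F)"
  proof
    fix c assume c: "c \<in> circ_op D S E \<inter> circ_op D S F"
    obtain g where g: "g \<in> S" "smult c g \<in> ext_ideal E" using c circ_mem_iff[OF E] by auto
    obtain h where h: "h \<in> S" "smult c h \<in> ext_ideal F" using c circ_mem_iff[OF F] by auto
    have "smult c g * h \<in> ext_ideal E" "smult c h * g \<in> ext_ideal F"
      using ext_mult(1)[OF E g(2)] ext_mult(1)[OF F h(2)] g h S_DX by auto
    hence "smult c (g * h) \<in> ext_ideal (E \<inter> F)"
      unfolding ext_ideal_def by (simp add: mult.commute)
    thus "c \<in> circ_op D S (E \<inter> F)" using circ_mem_iff[OF submod_Int[OF E F]] g h S_mult by blast
  qed
qed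

text \<open>An element c of E D[X]_S \<inter> K, with c g \<in> E[X], already lies in F D[X]_S \<inter> K
  for the finitely generated F \<subseteq> E spanned by the coefficients of c g.\<close>
lemma circ_finite_type:
  assumes E: "E \<in> Fbar D"
  shows "circ_op D S E = \<Union>{circ_op D S F | F. F \<in> fg_frac_ideals D \<and> F \<subseteq> E}"
proof
  have Es: "is_submodule D E" using E Fbar_submod by auto
  show "\<Union>{circ_op D S F | F. F \<in> fg_frac_ideals D \<and> F \<subseteq> E} \<subseteq> circ_op D S E"
    using circ_mono[OF Fbar_submod Es] fg_Fbar by blast
  show "circ_op D S E \<subseteq> \<Union>{circ_op D S F | F. F \<in> fg_frac_ideals D \<and> F \<subseteq> E}"
  proof
    fix c assume c: "c \<in> circ_op D S E"
    obtain e where e: "e \<in> E" "e \<noteq> 0" using E unfolding Fbar_def is_submodule_def by auto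
    obtain g where g: "g \<in> S" "smult c g \<in> ext_ideal E" using c circ_mem_iff[OF Es] by auto
    define A where "A = insert e (range (coeff (smult c g)))"
    define F where "F = gen_mod D A"
    have "finite A" unfolding A_def using finite_range_coeff by blast
    moreover have "F \<noteq> {0}" using gen_mod_gen[of e A] e unfolding F_def A_def by auto
    ultimately have "F \<in> fg_frac_ideals D" unfolding F_def fg_frac_ideals_def by blast
    moreover have "A \<subseteq> E" using e(1) g(2) unfolding A_def ext_ideal_def by auto
    hence "F \<subseteq> E" unfolding F_def by (rule gen_mod_least[OF Es])
    moreover have "coeff (smult c g) i \<in> F" for i
      unfolding F_def by (rule gen_mod_gen) (unfold A_def, blast)
    hence "smult c g \<in> ext_ideal F" unfolding ext_ideal_def by blast
    hence "c \<in> circ_op D S F" using circ_mem_iff[OF gen_mod_submod] g(1) unfolding F_def by blast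
    ultimately show "c \<in> \<Union>{circ_op D S F | F. F \<in> fg_frac_ideals D \<and> F \<subseteq> E}" by blast
  qed
qed

lemma circ_stable_semistar_ft:
  defines "st \<equiv> restrict (circ_op D S) (Fbar D)"
  shows "semistar D st \<and> semistar_stable D st \<and> semistar_finite_type D st \<and>
    st \<in> extensional (Fbar D)"
proof (intro conjI)
  show "semistar D st"
    unfolding semistar_def
  proof (intro conjI ballI allI impI)
    fix E assume E: "E \<in> Fbar D"
    show "st E \<in> Fbar D" using circ_Fbar[OF E] E by (simp add: st_def)
    show "E \<subseteq> st E" using circ_extensive[OF Fbar_submod[OF E]] E by (simp add: st_def)
    show "st (st E) = st E"
      using circ_Fbar[OF E] circ_idem[OF Fbar_submod[OF E]] E by (simp add: st_def)
  next
    fix x :: 'a and E assume x: "x \<noteq> 0" and E: "E \<in> Fbar D"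
    show "st ((\<lambda>e. x * e) ` E) = (\<lambda>e. x * e) ` st E"
      using Fbar_scale[OF E x] circ_scale[OF Fbar_submod[OF E] x] E by (simp add: st_def)
  next
    fix E F assume E: "E \<in> Fbar D" and F: "F \<in> Fbar D" and "E \<subseteq> F"
    thus "st E \<subseteq> st F" using circ_mono[OF Fbar_submod[OF E] Fbar_submod[OF F]] by (simp add: st_def)
  qed
  show "semistar_stable D st"
    unfolding semistar_stable_def
  proof (intro ballI)
    fix E F assume E: "E \<in> Fbar D" and F: "F \<in> Fbar D"
    thus "st (E \<inter> F) = st E \<inter> st F"
      using Fbar_Int[OF E F] circ_Int[OF Fbar_submod[OF E] Fbar_submod[OF F]] by (simp add: st_def)
  qed
  show "semistar_finite_type D st"
    unfolding semistar_finite_type_def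
  proof
    fix E assume E: "E \<in> Fbar D"
    have eq: "st F = circ_op D S F" if "F \<in> fg_frac_ideals D" for F
      using fg_Fbar that unfolding st_def by auto
    have "{st F | F. F \<in> fg_frac_ideals D \<and> F \<subseteq> E} =
        {circ_op D S F | F. F \<in> fg_frac_ideals D \<and> F \<subseteq> E}"
      by (rule Collect_cong) (metis eq)
    thus "st E = \<Union>{st F | F. F \<in> fg_frac_ideals D \<and> F \<subseteq> E}"
      using circ_finite_type[OF E] E by (simp add: st_def)
  qed
qed (simp add: st_def)

end

section \<open>Part (f): when E D[X]_S \<inter> K is a (semi)star operation\<close>

context qf_domain
begin

lemma colon_D: "colon D D = D"
proof
  show "colon D D \<subseteq> D"
  proof
    fix x assume "x \<in> colon D D"
    hence "x * 1 \<in> D" unfolding colon_def using one_mem by blast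
    thus "x \<in> D" by simp
  qed
  show "D \<subseteq> colon D D" unfolding colon_def using mult_mem by auto
qed

lemma v_eq_D_iff:
  assumes "A \<subseteq> D"
  shows "v_op D A = D \<longleftrightarrow> colon D A \<subseteq> D"
proof
  assume "v_op D A = D"
  moreover have "colon D A \<subseteq> colon D (colon D (colon D A))"
    unfolding colon_def by (auto simp: mult.commute)
  ultimately show "colon D A \<subseteq> D" using colon_D unfolding v_op_def by simp
next
  assume "colon D A \<subseteq> D"
  moreover have "D \<subseteq> colon D A" using assms mult_mem unfolding colon_def by auto
  ultimately show "v_op D A = D" using colon_D unfolding v_op_def by simp
qed

lemma colon_content_iff: "x \<in> colon D (content_D D g) \<longleftrightarrow> smult x g \<in> DX D"
proof -
  have "x \<in> colon D (content_D D g) \<longleftrightarrow> (\<lambda>e. x * e) ` content_D D g \<subseteq> D"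
    unfolding colon_def by auto
  also have "\<dots> \<longleftrightarrow> smult x g \<in> ext_ideal D" by (rule content_scale_sub_iff[OF D_submod])
  finally show ?thesis unfolding DX_ext .
qed

lemma Nstar_v_iff:
  "g \<in> Nstar D (v_op D) \<longleftrightarrow> g \<in> DX D \<and> g \<noteq> 0 \<and> colon D (content_D D g) \<subseteq> D"
  using v_eq_D_iff[OF content_sub_D] v_eq_D_iff[OF order_refl] colon_D
  unfolding Nstar_def by auto

end

context poly_mult_set
begin

lemma circ_D_iff: "x \<in> circ_op D S D \<longleftrightarrow> (\<exists>g\<in>S. x \<in> colon D (content_D D g))"
  using circ_mem_iff[OF D_submod, folded DX_ext] colon_content_iff by simp

lemma circ_D_eq_D_iff: "circ_op D S D = D \<longleftrightarrow> S \<subseteq> Nstar D (v_op D)"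
proof
  assume circ: "circ_op D S D = D"
  show "S \<subseteq> Nstar D (v_op D)"
    using circ_D_iff[unfolded circ] S_DX zero_notin_S Nstar_v_iff by blast
next
  assume "S \<subseteq> Nstar D (v_op D)"
  hence "circ_op D S D \<subseteq> D" using circ_D_iff Nstar_v_iff by blast
  thus "circ_op D S D = D" using circ_extensive[OF D_submod] by blast
qed

end

definition is_ideal :: "'a::field set \<Rightarrow> 'a set \<Rightarrow> bool" where
  "is_ideal D J \<longleftrightarrow> J \<subseteq> D \<and> is_submodule D J"

definition ideal_adjoin :: "'a::field set \<Rightarrow> 'a set \<Rightarrow> 'a \<Rightarrow> 'a set" where
  "ideal_adjoin D M a = {m + a * d | m d. m \<in> M \<and> d \<in> D}"

lemma chain_Union_ideal:
  assumes "C \<noteq> {}" "subset.chain A C" "\<And>J. J \<in> C \<Longrightarrow> is_ideal D J"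
  shows "is_ideal D (\<Union>C)"
proof -
  have "x + y \<in> \<Union>C" if x: "x \<in> \<Union>C" and y: "y \<in> \<Union>C" for x y
  proof -
    obtain X Y where XY: "X \<in> C" "Y \<in> C" "x \<in> X" "y \<in> Y" using x y by auto
    hence "X \<subseteq> Y \<or> Y \<subseteq> X" using assms(2) unfolding subset_chain_def by blast
    thus ?thesis using XY assms(3) unfolding is_ideal_def is_submodule_def by blast
  qed
  thus ?thesis using assms(1,3) unfolding is_ideal_def is_submodule_def by blast
qed

lemma chain_ext_ideal:
  assumes "C \<noteq> {}" "subset.chain A C" "f \<in> ext_ideal (\<Union>C)" "\<And>J. J \<in> C \<Longrightarrow> 0 \<in> J"
  obtains J where "J \<in> C" "f \<in> ext_ideal J"
proof -
  have "coeff f ` {..degree f} \<subseteq> \<Union>C" using assms(3) unfolding ext_ideal_def by auto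
  then obtain J where J: "J \<in> C" "coeff f ` {..degree f} \<subseteq> J"
    using finite_subset_Union_chain[OF _ _ assms(1,2)] by blast
  have "coeff f i \<in> J" for i
    using J assms(4) by (cases "i \<le> degree f") (auto simp: coeff_eq_0)
  thus ?thesis using that J unfolding ext_ideal_def by auto
qed

context qf_domain
begin

lemma Spec_ideal: "P \<in> Spec D \<Longrightarrow> is_ideal D P"
  unfolding Spec_def is_ideal_def is_submodule_def by auto

lemma denominator_ideal: "is_ideal D {d \<in> D. d * x \<in> D}"
proof -
  have "(d1 + d2) * x \<in> D" if "d1 * x \<in> D" "d2 * x \<in> D" for d1 d2
    using add_mem[OF that] by (simp add: distrib_right)
  moreover have "(d * d1) * x \<in> D" if "d \<in> D" "d1 * x \<in> D" for d d1
    using mult_mem[OF that] by (simp add: mult.assoc)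
  ultimately show ?thesis unfolding is_ideal_def is_submodule_def
    using zero_mem add_mem mult_mem by auto
qed

lemma ideal_adjoin:
  assumes M: "is_ideal D M" and a: "a \<in> D"
  shows "is_ideal D (ideal_adjoin D M a)" "M \<subseteq> ideal_adjoin D M a" "a \<in> ideal_adjoin D M a"
proof -
  have M0: "0 \<in> M" using M unfolding is_ideal_def is_submodule_def by auto
  have "m + a * 0 \<in> ideal_adjoin D M a" if "m \<in> M" for m
    unfolding ideal_adjoin_def using that zero_mem by blast
  thus "M \<subseteq> ideal_adjoin D M a" by (simp add: subset_iff)
  have "0 + a * 1 \<in> ideal_adjoin D M a" unfolding ideal_adjoin_def using M0 one_mem by blast
  thus "a \<in> ideal_adjoin D M a" by simp
  have "x + y \<in> ideal_adjoin D M a"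
    if x: "x \<in> ideal_adjoin D M a" and y: "y \<in> ideal_adjoin D M a" for x y
  proof -
    obtain m1 d1 m2 d2 where "x = m1 + a * d1" "y = m2 + a * d2" "m1 \<in> M" "m2 \<in> M" "d1 \<in> D" "d2 \<in> D"
      using x y unfolding ideal_adjoin_def by blast
    moreover hence "x + y = (m1 + m2) + a * (d1 + d2)" by (simp add: algebra_simps)
    ultimately show ?thesis
      using M add_mem unfolding ideal_adjoin_def is_ideal_def is_submodule_def by blast
  qed
  moreover have "d * x \<in> ideal_adjoin D M a"
    if d: "d \<in> D" and x: "x \<in> ideal_adjoin D M a" for d x
  proof -
    obtain m1 d1 where 1: "x = m1 + a * d1" "m1 \<in> M" "d1 \<in> D"
      using x unfolding ideal_adjoin_def by blast
    hence "d * x = d * m1 + a * (d * d1)" by (simp add: algebra_simps)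
    moreover have "d * m1 \<in> M" using M d 1 unfolding is_ideal_def is_submodule_def by blast
    ultimately show ?thesis using mult_mem[OF d 1(3)] unfolding ideal_adjoin_def by blast
  qed
  moreover have "ideal_adjoin D M a \<subseteq> D"
    using M a add_mem mult_mem unfolding ideal_adjoin_def is_ideal_def by auto
  ultimately show "is_ideal D (ideal_adjoin D M a)"
    using \<open>0 \<in> M\<close> \<open>M \<subseteq> ideal_adjoin D M a\<close>
    unfolding is_ideal_def is_submodule_def by blast
qed

lemma ideal_adjoin_mult:
  assumes M: "is_ideal D M" and a: "a \<in> D" and b: "b \<in> D" and ab: "a * b \<in> M"
    and x: "x \<in> ideal_adjoin D M a" and y: "y \<in> ideal_adjoin D M b"
  shows "x * y \<in> M"
proof -
  obtain m1 d1 where 1: "x = m1 + a * d1" "m1 \<in> M" "d1 \<in> D"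
    using x unfolding ideal_adjoin_def by blast
  obtain m2 d2 where 2: "y = m2 + b * d2" "m2 \<in> M" "d2 \<in> D"
    using y unfolding ideal_adjoin_def by blast
  have MD: "M \<subseteq> D" and Ms: "is_submodule D M" using M unfolding is_ideal_def by auto
  have "x * y = x * m2 + (b * d2) * m1 + (d1 * d2) * (a * b)"
    unfolding 1 2 by (simp add: algebra_simps)
  moreover have "x \<in> D" "b * d2 \<in> D" "d1 * d2 \<in> D"
    using 1 2 a b MD add_mem mult_mem by auto
  hence "x * m2 \<in> M" "(b * d2) * m1 \<in> M" "(d1 * d2) * (a * b) \<in> M"
    using 1 2 ab Ms unfolding is_submodule_def by blast+
  ultimately show ?thesis using Ms unfolding is_submodule_def by simp
qed

lemma ext_ideal_adjoin_mult:
  assumes M: "is_ideal D M" and ab: "a \<in> D" "b \<in> D" "a * b \<in> M"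
    and f: "f \<in> ext_ideal (ideal_adjoin D M a)" and g: "g \<in> ext_ideal (ideal_adjoin D M b)"
  shows "f * g \<in> ext_ideal M"
proof -
  have "coeff (f * g) n \<in> M" for n
    unfolding coeff_mult
  proof (rule submod_sum)
    show "is_submodule D M" using M unfolding is_ideal_def by auto
    fix i show "coeff f i * coeff g (n - i) \<in> M"
      using ideal_adjoin_mult[OF M ab] f g unfolding ext_ideal_def by auto
  qed
  thus ?thesis unfolding ext_ideal_def by blast
qed

lemma maximal_ideal_exists:
  assumes I: "is_ideal D I" "Q I"
    and chain: "\<And>C. C \<noteq> {} \<Longrightarrow> subset.chain {J. is_ideal D J \<and> Q J \<and> I \<subseteq> J} C \<Longrightarrow> Q (\<Union>C)"
  obtains M where "is_ideal D M" "Q M" "I \<subseteq> M"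
    "\<And>J. is_ideal D J \<Longrightarrow> Q J \<Longrightarrow> M \<subseteq> J \<Longrightarrow> J = M"
proof -
  let ?F = "{J. is_ideal D J \<and> Q J \<and> I \<subseteq> J}"
  have "I \<in> ?F" using I by blast
  moreover have "\<Union>C \<in> ?F" if C: "C \<noteq> {}" "subset.chain ?F C" for C
  proof -
    have "\<And>J. J \<in> C \<Longrightarrow> is_ideal D J" using C(2) unfolding subset_chain_def by blast
    hence "is_ideal D (\<Union>C)" by (rule chain_Union_ideal[OF C])
    moreover have "I \<subseteq> \<Union>C" using C unfolding subset_chain_def by blast
    ultimately show ?thesis using chain[OF C] by blast
  qed
  ultimately obtain M where M: "M \<in> ?F" and max: "\<forall>J\<in>?F. M \<subseteq> J \<longrightarrow> J = M"
    using subset_Zorn_nonempty[of ?F] by blast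
  show thesis
  proof (rule that)
    show "is_ideal D M" "Q M" "I \<subseteq> M" using M by auto
    fix J assume "is_ideal D J" "Q J" "M \<subseteq> J"
    thus "J = M" using max M by blast
  qed
qed

lemma maximal_ideal_prime:
  assumes M: "is_ideal D M" "M \<noteq> D"
    and max: "\<And>J. is_ideal D J \<Longrightarrow> Q J \<Longrightarrow> M \<subseteq> J \<Longrightarrow> J = M"
    and key: "\<And>a b. a \<in> D \<Longrightarrow> b \<in> D \<Longrightarrow> a * b \<in> M \<Longrightarrow> a \<notin> M \<Longrightarrow> b \<notin> M \<Longrightarrow>
       \<not> Q (ideal_adjoin D M a) \<Longrightarrow> \<not> Q (ideal_adjoin D M b) \<Longrightarrow> False"
  shows "M \<in> Spec D"
proof -
  have not_Q: "\<not> Q (ideal_adjoin D M a)" if a: "a \<in> D" "a \<notin> M" for a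
  proof
    assume "Q (ideal_adjoin D M a)"
    hence "ideal_adjoin D M a = M" using max ideal_adjoin(1,2)[OF M(1) a(1)] by blast
    thus False using ideal_adjoin(3)[OF M(1) a(1)] a(2) by blast
  qed
  have "x \<in> M \<or> y \<in> M" if "x \<in> D" "y \<in> D" "x * y \<in> M" for x y
    using key[OF that] not_Q that(1,2) by blast
  thus ?thesis using M unfolding Spec_def is_ideal_def is_submodule_def by blast
qed

end

context poly_mult_set
begin

lemma Nabla_above:
  assumes I: "is_ideal D I" and IS: "ext_ideal I \<inter> S = {}"
  obtains M where "M \<in> Nabla D S" "I \<subseteq> M"
proof -
  define Q where "Q J \<longleftrightarrow> ext_ideal J \<inter> S = {}" for J
  have QI: "Q I" using IS unfolding Q_def .
  have chain: "Q (\<Union>C)"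
    if C: "C \<noteq> {}" "subset.chain {J. is_ideal D J \<and> Q J \<and> I \<subseteq> J} C" for C
    unfolding Q_def
  proof (rule ccontr)
    have CQ: "\<And>J. J \<in> C \<Longrightarrow> is_ideal D J \<and> Q J" using C unfolding subset_chain_def by auto
    assume "ext_ideal (\<Union>C) \<inter> S \<noteq> {}"
    then obtain f where f: "f \<in> ext_ideal (\<Union>C)" "f \<in> S" by auto
    have "\<And>J. J \<in> C \<Longrightarrow> 0 \<in> J" using CQ unfolding is_ideal_def is_submodule_def by auto
    then obtain J where "J \<in> C" "f \<in> ext_ideal J" using chain_ext_ideal[OF C f(1)] by blast
    thus False using CQ f(2) unfolding Q_def by auto
  qed
  obtain M where M: "is_ideal D M" "Q M" "I \<subseteq> M"
    and max: "\<And>J. is_ideal D J \<Longrightarrow> Q J \<Longrightarrow> M \<subseteq> J \<Longrightarrow> J = M"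
    using maximal_ideal_exists[OF I QI chain] by blast
  have "1 \<in> ext_ideal D" using DX_one unfolding DX_ext .
  have "M \<in> Spec D"
  proof (rule maximal_ideal_prime[OF M(1) _ max])
    show "M \<noteq> D" using \<open>1 \<in> ext_ideal D\<close> M(2) one_in_S unfolding Q_def by blast
    fix a b assume ab: "a \<in> D" "b \<in> D" "a * b \<in> M" "a \<notin> M" "b \<notin> M"
      and nQ: "\<not> Q (ideal_adjoin D M a)" "\<not> Q (ideal_adjoin D M b)"
    obtain f g where f: "f \<in> ext_ideal (ideal_adjoin D M a)" "f \<in> S"
      and g: "g \<in> ext_ideal (ideal_adjoin D M b)" "g \<in> S"
      using nQ unfolding Q_def by blast
    hence "f * g \<in> ext_ideal M \<inter> S"
      using ext_ideal_adjoin_mult[OF M(1) ab(1-3)] S_mult by blast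
    thus False using M(2) unfolding Q_def by auto
  qed
  hence "M \<in> Delta D S" using M(2) unfolding Delta_def Q_def by blast
  moreover have "P = M" if "P \<in> Delta D S" "M \<subseteq> P" for P
    using max[of P] that Spec_ideal unfolding Delta_def Q_def by blast
  ultimately have "M \<in> Nabla D S" unfolding Nabla_def by blast
  thus thesis using that M(3) by blast
qed

text \<open>If x g \<in> D[X] with g \<in> S, then x \<in> D_P for every P \<in> \<nabla>(S): some coefficient of g
  lies outside P and serves as denominator.\<close>
lemma circ_D_subset_localize:
  assumes x: "x \<in> circ_op D S D" and P: "P \<in> Nabla D S"
  shows "x \<in> localize_at D P"
proof -
  obtain g where g: "g \<in> S" "smult x g \<in> DX D"
    using x circ_mem_iff[OF D_submod] DX_ext by auto
  have "P \<in> Spec D" "ext_ideal P \<inter> S = {}" using P unfolding Nabla_def Delta_def by auto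
  then obtain i where i: "coeff g i \<notin> P" using g unfolding ext_ideal_def by auto
  moreover have "0 \<in> P" using \<open>P \<in> Spec D\<close> unfolding Spec_def by blast
  ultimately have "coeff g i \<noteq> 0" by auto
  hence "x = (x * coeff g i) / coeff g i" by simp
  moreover have "x * coeff g i \<in> D" "coeff g i \<in> D" using g S_DX unfolding DX_def by auto
  ultimately show ?thesis unfolding localize_at_def using i by blast
qed

text \<open>Conversely, if x lies in every D_P, P \<in> \<nabla>(S), then the ideal of denominators of x
  meets S in a polynomial: otherwise it lies in some P \<in> \<nabla>(S), contradicting x \<in> D_P.\<close>
lemma localizations_subset_circ_D:
  assumes x: "x \<in> \<Inter>{localize_at D P | P. P \<in> Nabla D S}"
  shows "x \<in> circ_op D S D"
proof -
  define I where "I = {d \<in> D. d * x \<in> D}"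
  have I: "is_ideal D I" unfolding I_def by (rule denominator_ideal)
  show "x \<in> circ_op D S D"
  proof (cases "ext_ideal I \<inter> S = {}")
    case False
    then obtain g where g: "g \<in> S" "g \<in> ext_ideal I" by auto
    hence "smult x g \<in> ext_ideal D" unfolding ext_ideal_def I_def by (auto simp: mult.commute)
    thus ?thesis using circ_mem_iff[OF D_submod] g by auto
  next
    case True
    then obtain M where M: "M \<in> Nabla D S" "I \<subseteq> M" using Nabla_above[OF I] by blast
    hence "x \<in> localize_at D M" using x by blast
    then obtain a s where as: "a \<in> D" "s \<in> D" "s \<notin> M" "x = a / s"
      unfolding localize_at_def by auto
    have "s \<noteq> 0" using as M unfolding Nabla_def Delta_def Spec_def by auto
    hence "s \<in> I" unfolding I_def using as by auto
    thus ?thesis using M(2) as(3) by blast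
  qed
qed

lemma circ_D_eq_localizations: "circ_op D S D = \<Inter>{localize_at D P | P. P \<in> Nabla D S}"
  using circ_D_subset_localize localizations_subset_circ_D by blast

end

section \<open>Part (g): the correspondence with stable semistar operations of finite type\<close>

text \<open>A prime P belongs to \<Delta>(S) iff P = 0 or 1 \<notin> P D[X]_S, so \<Delta>(S), and hence the extended
  saturation of S, is determined by the operation E \<mapsto> E D[X]_S \<inter> K.\<close>
lemma (in poly_mult_set) Delta_iff:
  assumes P: "P \<in> Spec D"
  shows "ext_ideal P \<inter> S = {} \<longleftrightarrow> P = {0} \<or> 1 \<notin> restrict (circ_op D S) (Fbar D) P"
proof (cases "P = {0}")
  case True
  thus ?thesis using zero_notin_S by (auto simp: ext_ideal_zero)
next
  case False
  have Ps: "is_submodule D P" using Spec_ideal[OF P] unfolding is_ideal_def by blast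
  hence "P \<in> Fbar D" using False unfolding Fbar_def by blast
  moreover have "1 \<in> circ_op D S P \<longleftrightarrow> (\<exists>g\<in>S. g \<in> ext_ideal P)" using circ_mem_iff[OF Ps] by simp
  ultimately show ?thesis using False by auto
qed

lemma (in poly_mult_set) ext_sat_via_circ:
  "ext_sat D S = DX D - \<Union>{ext_ideal P | P. P \<in> Spec D \<and>
      (P = {0} \<or> 1 \<notin> restrict (circ_op D S) (Fbar D) P)}"
  unfolding ext_sat_def using Delta_iff by blast

lemma (in qf_domain) circ_inj:
  "inj_on (\<lambda>T. restrict (circ_op D T) (Fbar D)) {T. mult_subset D T \<and> is_ext_saturated D T}"
proof (rule inj_onI)
  fix T1 T2 assume "T1 \<in> {T. mult_subset D T \<and> is_ext_saturated D T}"
    and "T2 \<in> {T. mult_subset D T \<and> is_ext_saturated D T}"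
    and eq: "restrict (circ_op D T1) (Fbar D) = restrict (circ_op D T2) (Fbar D)"
  hence T: "poly_mult_set D T1" "poly_mult_set D T2" "T1 = ext_sat D T1" "T2 = ext_sat D T2"
    unfolding poly_mult_set_def poly_mult_set_axioms_def is_ext_saturated_def
    using qf_domain_axioms by auto
  have "ext_sat D T1 = ext_sat D T2"
    unfolding poly_mult_set.ext_sat_via_circ[OF T(1)] poly_mult_set.ext_sat_via_circ[OF T(2)] eq ..
  thus "T1 = T2" using T(3,4) by simp
qed

locale stable_ft_semistar = qf_domain +
  fixes st :: "'a::field set \<Rightarrow> 'a set"
  assumes semistar: "semistar D st"
    and stable: "semistar_stable D st"
    and finite_type: "semistar_finite_type D st"
begin

lemma st_Fbar: "E \<in> Fbar D \<Longrightarrow> st E \<in> Fbar D"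
  and st_scale: "E \<in> Fbar D \<Longrightarrow> x \<noteq> 0 \<Longrightarrow> st ((\<lambda>e. x * e) ` E) = (\<lambda>e. x * e) ` st E"
  and st_mono: "E \<in> Fbar D \<Longrightarrow> F \<in> Fbar D \<Longrightarrow> E \<subseteq> F \<Longrightarrow> st E \<subseteq> st F"
  and st_extensive: "E \<in> Fbar D \<Longrightarrow> E \<subseteq> st E"
  and st_idem: "E \<in> Fbar D \<Longrightarrow> st (st E) = st E"
  using semistar unfolding semistar_def by simp_all

lemma st_Int: "E \<in> Fbar D \<Longrightarrow> F \<in> Fbar D \<Longrightarrow> st (E \<inter> F) = st E \<inter> st F"
  using stable unfolding semistar_stable_def by blast

lemma st_finite_type: "E \<in> Fbar D \<Longrightarrow> st E = \<Union>{st F | F. F \<in> fg_frac_ideals D \<and> F \<subseteq> E}"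
  using finite_type unfolding semistar_finite_type_def by blast

lemma st_submod: "E \<in> Fbar D \<Longrightarrow> is_submodule D (st E)"
  using st_Fbar Fbar_submod by blast

lemma one_in_st_D: "1 \<in> st D"
  using st_extensive[OF D_Fbar] one_mem by blast

lemma st_eq_st_D_iff:
  assumes I: "I \<in> Fbar D" "I \<subseteq> D"
  shows "st I = st D \<longleftrightarrow> 1 \<in> st I"
proof
  assume one: "1 \<in> st I"
  have "d * 1 \<in> st I" if "d \<in> D" for d
    using one st_submod[OF I(1)] that unfolding is_submodule_def by blast
  hence "D \<subseteq> st I" by auto
  hence "st D \<subseteq> st I" using st_mono[OF D_Fbar st_Fbar[OF I(1)]] st_idem[OF I(1)] by blast
  thus "st I = st D" using st_mono[OF I(1) D_Fbar I(2)] by blast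
qed (use one_in_st_D in simp)

text \<open>Finite type: if 1 lies in the \<star>-closure of the union of a chain of ideals, it already lies
  in the \<star>-closure of a finitely generated submodule, hence of one member of the chain.\<close>
lemma one_notin_st_chain_Union:
  assumes C: "C \<noteq> {}" "subset.chain A C"
    and CI: "\<And>J. J \<in> C \<Longrightarrow> is_ideal D J \<and> J \<in> Fbar D \<and> 1 \<notin> st J"
  shows "\<Union>C \<in> Fbar D" "1 \<notin> st (\<Union>C)"
proof -
  obtain J0 where "J0 \<in> C" using C(1) by blast
  moreover have "is_ideal D (\<Union>C)" using chain_Union_ideal[OF C] CI by blast
  ultimately show UF: "\<Union>C \<in> Fbar D"
    using Fbar_of_sup[of D "\<Union>C" J0] CI unfolding is_ideal_def by blast
  show "1 \<notin> st (\<Union>C)"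
  proof
    assume "1 \<in> st (\<Union>C)"
    then obtain F where F: "F \<in> fg_frac_ideals D" "F \<subseteq> \<Union>C" "1 \<in> st F"
      using st_finite_type[OF UF] by blast
    then obtain B where B: "finite B" "F = gen_mod D B" unfolding fg_frac_ideals_def by blast
    have "B \<subseteq> \<Union>C" using F(2) B(2) gen_mod_gen by blast
    then obtain J where J: "J \<in> C" "B \<subseteq> J"
      using finite_subset_Union_chain[OF B(1) _ C] by blast
    have "F \<subseteq> J" using B(2) J(2) gen_mod_least CI[OF J(1)] unfolding is_ideal_def by blast
    hence "st F \<subseteq> st J" using st_mono fg_Fbar F(1) CI[OF J(1)] by blast
    thus False using F(3) CI[OF J(1)] by blast
  qed
qed

text \<open>If xy \<in> M and 1 \<in> (M + yD)^\<star>, then x (M + yD) \<subseteq> M gives x \<in> M^\<star>, hence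
  (M + xD)^\<star> \<subseteq> M^\<star>.\<close>
lemma st_adjoin_subset:
  assumes M: "is_ideal D M" "M \<in> Fbar D"
    and xy: "x \<in> D" "y \<in> D" "x * y \<in> M" "x \<notin> M"
    and one: "1 \<in> st (ideal_adjoin D M y)"
  shows "st (ideal_adjoin D M x) \<subseteq> st M"
proof -
  have Ms: "is_submodule D M" using M(1) unfolding is_ideal_def by blast
  have "0 \<in> M" using Ms unfolding is_submodule_def by blast
  hence x0: "x \<noteq> 0" using xy(4) by blast
  have Jx: "ideal_adjoin D M x \<in> Fbar D" and Jy: "ideal_adjoin D M y \<in> Fbar D"
    using Fbar_of_sup[OF _ M(2)] ideal_adjoin[OF M(1)] xy(1,2) unfolding is_ideal_def by blast+
  have "(\<lambda>e. x * e) ` ideal_adjoin D M y \<subseteq> M"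
    using ideal_adjoin_mult[OF M(1) xy(1-3) ideal_adjoin(3)[OF M(1) xy(1)]] by blast
  hence "(\<lambda>e. x * e) ` st (ideal_adjoin D M y) \<subseteq> st M"
    using st_mono[OF Fbar_scale[OF Jy x0] M(2)] st_scale[OF Jy x0] by simp
  hence "x \<in> st M" using one by force
  hence "d * x \<in> st M" if "d \<in> D" for d using st_submod[OF M(2)] that unfolding is_submodule_def by blast
  hence "ideal_adjoin D M x \<subseteq> st M"
    using st_extensive[OF M(2)] st_submod[OF M(2)]
    unfolding ideal_adjoin_def is_submodule_def by (auto simp: mult.commute)
  thus ?thesis using st_mono[OF Jx st_Fbar[OF M(2)]] st_idem[OF M(2)] by blast
qed

text \<open>An ideal I with 1 \<notin> I^\<star> lies in a prime M with 1 \<notin> M^\<star>: take M maximal among the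
  ideals J \<supseteq> I in \<bar>F(D) with 1 \<notin> J^\<star>.\<close>
lemma prime_above:
  assumes I: "I \<in> Fbar D" "is_ideal D I" and nI: "1 \<notin> st I"
  obtains M where "M \<in> Spec D" "I \<subseteq> M" "1 \<notin> st M"
proof -
  define Q where "Q J \<longleftrightarrow> J \<in> Fbar D \<and> 1 \<notin> st J" for J
  have QI: "Q I" using I nI unfolding Q_def by blast
  have chain: "Q (\<Union>C)"
    if C: "C \<noteq> {}" "subset.chain {J. is_ideal D J \<and> Q J \<and> I \<subseteq> J} C" for C
    using one_notin_st_chain_Union[OF C] C(2) unfolding subset_chain_def Q_def by blast
  obtain M where M: "is_ideal D M" "Q M" "I \<subseteq> M"
    and max: "\<And>J. is_ideal D J \<Longrightarrow> Q J \<Longrightarrow> M \<subseteq> J \<Longrightarrow> J = M"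
    using maximal_ideal_exists[OF I(2) QI chain] by blast
  have MF: "M \<in> Fbar D" and nM: "1 \<notin> st M" using M(2) unfolding Q_def by auto
  have "M \<in> Spec D"
  proof (rule maximal_ideal_prime[OF M(1) _ max])
    show "M \<noteq> D" using nM one_in_st_D by blast
    fix x y assume xy: "x \<in> D" "y \<in> D" "x * y \<in> M" "x \<notin> M" "y \<notin> M"
      and nQ: "\<not> Q (ideal_adjoin D M x)" "\<not> Q (ideal_adjoin D M y)"
    have "ideal_adjoin D M a \<in> Fbar D" if "a \<in> D" for a
      using Fbar_of_sup[OF _ MF] ideal_adjoin[OF M(1) that] unfolding is_ideal_def by blast
    hence "1 \<in> st (ideal_adjoin D M x)" "1 \<in> st (ideal_adjoin D M y)"
      using nQ xy(1,2) unfolding Q_def by blast+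
    thus False using st_adjoin_subset[OF M(1) MF xy(1-4)] nM by blast
  qed
  thus thesis using that M(3) nM by blast
qed

lemma Nstar_iff:
  assumes g: "g \<in> DX D" "g \<noteq> 0"
  shows "g \<in> Nstar D st \<longleftrightarrow> (\<forall>M\<in>Spec D. 1 \<notin> st M \<longrightarrow> g \<notin> ext_ideal M)"
proof
  assume N: "g \<in> Nstar D st"
  show "\<forall>M\<in>Spec D. 1 \<notin> st M \<longrightarrow> g \<notin> ext_ideal M"
  proof (intro ballI impI notI)
    fix M assume M: "M \<in> Spec D" "1 \<notin> st M" and "g \<in> ext_ideal M"
    have Ms: "is_submodule D M" using Spec_ideal[OF M(1)] unfolding is_ideal_def by blast
    hence sub: "content_D D g \<subseteq> M" using content_sub_iff \<open>g \<in> ext_ideal M\<close> by blast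
    hence "M \<in> Fbar D" using Fbar_of_sup[OF Ms content_Fbar[OF g(2)]] by blast
    hence "st (content_D D g) \<subseteq> st M" using st_mono[OF content_Fbar[OF g(2)] _ sub] by blast
    thus False using N M(2) one_in_st_D unfolding Nstar_def by auto
  qed
next
  assume avoid: "\<forall>M\<in>Spec D. 1 \<notin> st M \<longrightarrow> g \<notin> ext_ideal M"
  have cF: "content_D D g \<in> Fbar D" using content_Fbar[OF g(2)] .
  have cI: "is_ideal D (content_D D g)"
    using content_submod content_sub_D[OF g(1)] unfolding is_ideal_def by blast
  have "1 \<in> st (content_D D g)"
  proof (rule ccontr)
    assume "1 \<notin> st (content_D D g)"
    then obtain M where M: "M \<in> Spec D" "content_D D g \<subseteq> M" "1 \<notin> st M"
      using prime_above[OF cF cI] by blast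
    hence "g \<in> ext_ideal M" using content_sub_iff Spec_ideal unfolding is_ideal_def by blast
    thus False using avoid M by blast
  qed
  thus "g \<in> Nstar D st"
    using st_eq_st_D_iff[OF cF content_sub_D[OF g(1)]] g unfolding Nstar_def by blast
qed

lemma one_in_Nstar: "1 \<in> Nstar D st"
proof -
  have "content_D D 1 \<in> Fbar D" "content_D D 1 \<subseteq> D"
    using content_Fbar[of 1] content_sub_D[OF DX_one] by auto
  moreover have "1 \<in> st (content_D D 1)"
    using st_extensive[OF calculation(1)] coeff_in_content[of 1 0] by auto
  ultimately show ?thesis using st_eq_st_D_iff DX_one unfolding Nstar_def by auto
qed

text \<open>By Gauss' lemma N^\<star> is multiplicative.\<close>
lemma Nstar_mult_subset: "mult_subset D (Nstar D st)"
proof -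
  have "f * g \<in> Nstar D st" if f: "f \<in> Nstar D st" and g: "g \<in> Nstar D st" for f g
  proof -
    have fD: "f \<in> DX D" "f \<noteq> 0" and gD: "g \<in> DX D" "g \<noteq> 0" using f g unfolding Nstar_def by auto
    have fgD: "f * g \<in> DX D" "f * g \<noteq> 0" using DX_mult[OF fD(1) gD(1)] fD gD by auto
    show ?thesis unfolding Nstar_iff[OF fgD]
      using Nstar_iff[OF fD] Nstar_iff[OF gD] f g ext_ideal_prime[OF _ fD(1) gD(1)] by blast
  qed
  thus ?thesis using one_in_Nstar unfolding mult_subset_def Nstar_def by blast
qed

text \<open>N^\<star> is extended saturated: it is the complement of the union of the M[X]
  with M prime and 1 \<notin> M^\<star>, and these are disjoint from N^\<star>.\<close>
lemma Nstar_ext_saturated: "is_ext_saturated D (Nstar D st)"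
  unfolding is_ext_saturated_def
proof
  show "Nstar D st \<subseteq> ext_sat D (Nstar D st)" unfolding ext_sat_def Nstar_def by blast
  show "ext_sat D (Nstar D st) \<subseteq> Nstar D st"
  proof
    fix g assume g: "g \<in> ext_sat D (Nstar D st)"
    have "{0} \<in> Spec D" using zero_mem one_mem unfolding Spec_def by auto
    moreover have "ext_ideal {0} \<inter> Nstar D st = {}" unfolding ext_ideal_zero Nstar_def by blast
    ultimately have "g \<notin> ext_ideal {0}" using g unfolding ext_sat_def by blast
    hence gD: "g \<in> DX D" "g \<noteq> 0" using g unfolding ext_sat_def ext_ideal_zero by auto
    have "ext_ideal M \<inter> Nstar D st = {}" if "M \<in> Spec D" "1 \<notin> st M" for M
      using Nstar_iff that unfolding Nstar_def by blast
    hence "\<forall>M\<in>Spec D. 1 \<notin> st M \<longrightarrow> g \<notin> ext_ideal M" using g unfolding ext_sat_def by blast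
    thus "g \<in> Nstar D st" using Nstar_iff[OF gD] by blast
  qed
qed

sublocale N: poly_mult_set D "Nstar D st"
  using Nstar_mult_subset by unfold_locales

text \<open>If c g \<in> E[X] with c(g)^\<star> = D^\<star>, then c D^\<star> = (c c(g))^\<star> \<subseteq> E^\<star>, so c \<in> E^\<star>.\<close>
lemma circ_Nstar_subset:
  assumes E: "E \<in> Fbar D" and c: "c \<in> circ_op D (Nstar D st) E"
  shows "c \<in> st E"
proof (cases "c = 0")
  case True
  thus ?thesis using st_submod[OF E] unfolding is_submodule_def by simp
next
  case False
  have Es: "is_submodule D E" using Fbar_submod[OF E] .
  obtain g where g: "g \<in> Nstar D st" "smult c g \<in> ext_ideal E"
    using c N.circ_mem_iff[OF Es] by blast
  have gN: "g \<noteq> 0" "st (content_D D g) = st D" using g unfolding Nstar_def by auto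
  note cF = content_Fbar[OF gN(1)]
  have "(\<lambda>e. c * e) ` content_D D g \<subseteq> E" using content_scale_sub_iff[OF Es] g(2) by blast
  hence "st ((\<lambda>e. c * e) ` content_D D g) \<subseteq> st E"
    using st_mono[OF Fbar_scale[OF cF False] E] by blast
  hence "(\<lambda>e. c * e) ` st D \<subseteq> st E" using st_scale[OF cF False] gN(2) by simp
  thus ?thesis using one_in_st_D by force
qed

text \<open>If 0 \<noteq> c \<in> E^\<star>, then 1 \<in> (c\<inverse>E \<inter> D)^\<star> by stability, so by finite type 1 \<in> G^\<star> for a
  finitely generated G \<subseteq> c\<inverse>E \<inter> D; G is the content of some g \<in> N^\<star>, and c g \<in> E[X].\<close>
lemma st_subset_circ_Nstar:
  assumes E: "E \<in> Fbar D" and c: "c \<in> st E"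
  shows "c \<in> circ_op D (Nstar D st) E"
proof (cases "c = 0")
  case True
  thus ?thesis using N.circ_submod[OF Fbar_submod[OF E]] by (simp add: is_submodule_def)
next
  case False
  define I where "I = (\<lambda>e. inverse c * e) ` E \<inter> D"
  have ic: "inverse c \<noteq> 0" using False by simp
  have E'F: "(\<lambda>e. inverse c * e) ` E \<in> Fbar D" by (rule Fbar_scale[OF E ic])
  have IF: "I \<in> Fbar D" unfolding I_def by (rule Fbar_Int[OF E'F D_Fbar])
  have "st I = (\<lambda>e. inverse c * e) ` st E \<inter> st D"
    unfolding I_def st_Int[OF E'F D_Fbar] st_scale[OF E ic] ..
  hence "1 \<in> st I" using c False one_in_st_D by (auto simp: image_iff intro!: bexI[of _ c])
  then obtain G where G: "G \<in> fg_frac_ideals D" "G \<subseteq> I" "1 \<in> st G"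
    using st_finite_type[OF IF] by blast
  obtain g where g: "g \<noteq> 0" "g \<in> ext_ideal G" "content_D D g = G"
    using fg_is_content[OF G(1)] by blast
  have GD: "G \<subseteq> D" using G(2) unfolding I_def by blast
  hence gD: "g \<in> DX D" using g(2) unfolding DX_def ext_ideal_def by blast
  have "st G = st D" using st_eq_st_D_iff[OF subsetD[OF fg_Fbar G(1)] GD] G(3) by blast
  hence gN: "g \<in> Nstar D st" using g gD unfolding Nstar_def by blast
  have "coeff g i \<in> (\<lambda>e. inverse c * e) ` E" for i
    using g(2) G(2) unfolding ext_ideal_def I_def by blast
  hence "c * coeff g i \<in> E" for i using mem_scale_iff[OF ic, of "coeff g i" E] by simp
  hence "smult c g \<in> ext_ideal E" unfolding ext_ideal_def by simp
  thus ?thesis using N.circ_mem_iff[OF Fbar_submod[OF E]] gN by blast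
qed

lemma circ_Nstar: "E \<in> Fbar D \<Longrightarrow> circ_op D (Nstar D st) E = st E"
  using circ_Nstar_subset st_subset_circ_Nstar by blast

end

lemma bij_betw_restrict_pred:
  assumes "bij_betw f A B" and "\<And>x. x \<in> A \<Longrightarrow> P x \<longleftrightarrow> Q (f x)"
  shows "bij_betw f {x\<in>A. P x} {y\<in>B. Q y}"
  using assms unfolding bij_betw_def inj_on_def by auto

context qf_domain
begin

lemma circ_bij:
  "bij_betw (\<lambda>T. restrict (circ_op D T) (Fbar D))
     {T. mult_subset D T \<and> is_ext_saturated D T}
     {st. semistar D st \<and> semistar_stable D st \<and> semistar_finite_type D st \<and>
          st \<in> extensional (Fbar D)}"
  unfolding bij_betw_def
proof (intro conjI circ_inj subset_antisym subsetI)
  fix st assume "st \<in> (\<lambda>T. restrict (circ_op D T) (Fbar D)) ` {T. mult_subset D T \<and> is_ext_saturated D T}"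
  then obtain T where T: "mult_subset D T" "st = restrict (circ_op D T) (Fbar D)" by blast
  interpret poly_mult_set D T using T(1) by unfold_locales
  show "st \<in> {st. semistar D st \<and> semistar_stable D st \<and> semistar_finite_type D st \<and>
          st \<in> extensional (Fbar D)}"
    using circ_stable_semistar_ft T(2) by blast
next
  fix st assume "st \<in> {st. semistar D st \<and> semistar_stable D st \<and> semistar_finite_type D st \<and>
          st \<in> extensional (Fbar D)}"
  hence st: "stable_ft_semistar D st" "st \<in> extensional (Fbar D)"
    unfolding stable_ft_semistar_def stable_ft_semistar_axioms_def using qf_domain_axioms by auto
  have "restrict (circ_op D (Nstar D st)) (Fbar D) = st"
    using stable_ft_semistar.circ_Nstar[OF st(1)] by (intro extensionalityI[OF _ st(2)]) auto
  moreover have "Nstar D st \<in> {T. mult_subset D T \<and> is_ext_saturated D T}"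
    using stable_ft_semistar.Nstar_mult_subset[OF st(1)]
      stable_ft_semistar.Nstar_ext_saturated[OF st(1)] by blast
  ultimately show "st \<in> (\<lambda>T. restrict (circ_op D T) (Fbar D)) ` {T. mult_subset D T \<and> is_ext_saturated D T}"
    by (rule image_eqI[OF sym])
qed

text \<open>By part (f) the bijection restricts to the (semi)star operations, i.e. those with D^\<star> = D.\<close>
lemma circ_bij_star:
  "bij_betw (\<lambda>T. restrict (circ_op D T) (Fbar D))
     {T. mult_subset D T \<and> is_ext_saturated D T \<and> T \<subseteq> Nstar D (v_op D)}
     {st. semistar D st \<and> semistar_stable D st \<and> semistar_finite_type D st \<and>
          st \<in> extensional (Fbar D) \<and> st D = D}"
proof -
  have "T \<subseteq> Nstar D (v_op D) \<longleftrightarrow> restrict (circ_op D T) (Fbar D) D = D"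
    if "T \<in> {T. mult_subset D T \<and> is_ext_saturated D T}" for T
  proof -
    interpret poly_mult_set D T using that by unfold_locales simp
    show ?thesis using circ_D_eq_D_iff D_Fbar by simp
  qed
  from bij_betw_restrict_pred[OF circ_bij, of "\<lambda>T. T \<subseteq> Nstar D (v_op D)" "\<lambda>st. st D = D", OF this]
  show ?thesis by (simp add: conj_assoc)
qed

end

section \<open>Part (h): when D[X]_S is the Nagata ring of v\<close>

definition saturated :: "'a::field set \<Rightarrow> 'a poly set \<Rightarrow> bool" where
  "saturated D T \<longleftrightarrow> (\<forall>f\<in>DX D. \<forall>g\<in>DX D. f * g \<in> T \<longrightarrow> g \<in> T)"

lemma (in qf_domain) locX_eq_imp_subset:
  assumes T1: "saturated D T1" "0 \<notin> T1" and T2: "T2 \<subseteq> DX D" "0 \<notin> T2"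
    and eq: "locX D T2 = locX D T1"
  shows "T2 \<subseteq> T1"
proof
  fix g assume g: "g \<in> T2"
  have "Fract 1 g \<in> locX D T1" using eq g DX_one unfolding locX_def by blast
  then obtain f h where fh: "f \<in> DX D" "h \<in> T1" "Fract 1 g = Fract f h" unfolding locX_def by blast
  have "g \<noteq> 0" "h \<noteq> 0" using g fh T1 T2 by auto
  hence "f * g \<in> T1" using fh by (simp add: eq_fract)
  thus "g \<in> T1" using T1(1) fh(1) g T2(1) unfolding saturated_def by blast
qed

lemma (in qf_domain) locX_inj_saturated:
  assumes "saturated D T1" "T1 \<subseteq> DX D" "0 \<notin> T1" "saturated D T2" "T2 \<subseteq> DX D" "0 \<notin> T2"
  shows "locX D T1 = locX D T2 \<longleftrightarrow> T1 = T2"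
  using locX_eq_imp_subset[of T1 T2] locX_eq_imp_subset[of T2 T1] assms by auto

text \<open>Extended saturated sets are saturated: P[X] is an ideal of D[X].\<close>
lemma (in qf_domain) ext_saturated_saturated:
  assumes "is_ext_saturated D T"
  shows "saturated D T"
  unfolding saturated_def
proof (intro ballI impI)
  fix f g assume f: "f \<in> DX D" and g: "g \<in> DX D" and fg: "f * g \<in> T"
  have "g \<notin> ext_ideal P" if "P \<in> Spec D" "ext_ideal P \<inter> T = {}" for P
    using ext_mult(2)[OF _ _ f, of P g] Spec_ideal[OF that(1)] that(2) fg
    unfolding is_ideal_def by blast
  hence "g \<in> ext_sat D T" unfolding ext_sat_def using g by blast
  thus "g \<in> T" using assms unfolding is_ext_saturated_def by simp
qed

text \<open>N^v is saturated: (D : c(fg)) \<supseteq> (D : c(g)).\<close>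
lemma (in qf_domain) Nv_saturated: "saturated D (Nstar D (v_op D))"
  unfolding saturated_def
proof (intro ballI impI)
  fix f g assume f: "f \<in> DX D" and g: "g \<in> DX D" and fg: "f * g \<in> Nstar D (v_op D)"
  have "x \<in> colon D (content_D D (f * g))" if "x \<in> colon D (content_D D g)" for x
  proof -
    have "f * smult x g \<in> DX D" using DX_mult[OF f] that colon_content_iff by blast
    thus ?thesis using colon_content_iff by simp
  qed
  hence "colon D (content_D D g) \<subseteq> colon D (content_D D (f * g))" by blast
  thus "g \<in> Nstar D (v_op D)" using fg g Nstar_v_iff by auto
qed

lemma (in poly_mult_set) part_h:
  assumes "is_ext_saturated D S"
  shows "Na D (v_op D) = locX D S \<longleftrightarrow> S = Nstar D (v_op D)"
  unfolding Na_def
  using locX_inj_saturated[OF Nv_saturated _ _ ext_saturated_saturated[OF assms]]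
    S_DX zero_notin_S unfolding Nstar_def by blast

theorem theorem2p1:
  fixes D :: "'a::field set" and S :: "'a poly set"
  assumes D: "is_domain_with_qf D"
    and S: "mult_subset D S"
  shows
    "(circ_op D S D = D \<longleftrightarrow> S \<subseteq> Nstar D (v_op D)) \<and>
     (S \<subseteq> Nstar D (v_op D) \<longleftrightarrow> D = \<Inter>{localize_at D P | P. P \<in> Nabla D S})
    \<and>
     bij_betw (\<lambda>T. restrict (circ_op D T) (Fbar D))
        {T. mult_subset D T \<and> is_ext_saturated D T}
        {st. semistar D st \<and> semistar_stable D st \<and> semistar_finite_type D st \<and>
             st \<in> extensional (Fbar D)} \<and>
     bij_betw (\<lambda>T. restrict (circ_op D T) (Fbar D))
        {T. mult_subset D T \<and> is_ext_saturated D T \<and> T \<subseteq> Nstar D (v_op D)}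
        {st. semistar D st \<and> semistar_stable D st \<and> semistar_finite_type D st \<and>
             st \<in> extensional (Fbar D) \<and> st D = D} \<and>
     (is_ext_saturated D S \<longrightarrow> (Na D (v_op D) = locX D S \<longleftrightarrow> S = Nstar D (v_op D)))"
proof -
  interpret poly_mult_set D S using D S by unfold_locales
  have f: "S \<subseteq> Nstar D (v_op D) \<longleftrightarrow> D = \<Inter>{localize_at D P | P. P \<in> Nabla D S}"
    using circ_D_eq_D_iff circ_D_eq_localizations by auto
  show ?thesis using circ_D_eq_D_iff f circ_bij circ_bij_star part_h by blast
qed

end
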